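(* Let $y(t)=e^{i\theta(t)}\in C$ be the solution of the spherical mean curvature flow $y'(t)=H^S(y(t))$ with $y(0)=e^{i\theta_0}$, $0<\theta_0<\pi/g$. Then, on its interval of existence, $$\cos g\theta(t)=e^{gnt}\{\cos g\theta_0+\delta\}-\delta.$$
   Context: Let $M^n$ be a compact isoparametric hypersurface in the unit sphere $S^{n+1}\subset\mathbb{R}^{n+2}$ (constant principal curvatures) with $g$ distinct principal curvatures; then $g\in\{1,2,3,4,6\}$. Fix $x_0\in M$ and identify the 2-dimensional normal space $\nu_{x_0}M$ of $M$ in $\mathbb{R}^{n+2}$ with $\mathbb{C}$ so that the two focal submanifolds $M_+$, $M_-$ ($\dim M_+\le\dim M_-$) meet the normal circle at $1$ and $e^{i\pi/g}$. The Weyl chamber is $C=\{re^{i\theta}:r>0,\ 0<\theta<\pi/g\}$. The multiplicity data is $(m_1,m_2)$, $m_1\le m_2$, with $m_1=m_2$ if $g$ is odd and $(m_1+m_2)g=2n$. For $x\in C$, $M_x$ is the submanifold of $\mathbb{R}^{n+2}$ parallel to $M$ through $x$, and $H^S(x)$ is its mean curvature vector at $x$ as a hypersurface of $S^{n+1}(|x|)$, which equals $-\frac{n}{r}ie^{i\theta}\{\cot g\theta+\delta\csc g\theta\}$ for $x=re^{i\theta}$. The spherical MCF of $M_{y(0)}$ is the family $M_{y(t)}$. Set $\delta=(m_2-m_1)/(m_2+m_1)$ if $g\ge2$ and $\delta=0$ if $g=1$. *)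

theory Defs
  imports "HOL-Analysis.Analysis"
begin

text \<open>Multiplicity data of an isoparametric hypersurface with g distinct principal
curvatures: g in {1,2,3,4,6}, 0 < m1 <= m2, m1 = m2 if g is odd, (m1+m2) g = 2 n.\<close>
definition iso_data :: "nat \<Rightarrow> nat \<Rightarrow> nat \<Rightarrow> nat \<Rightarrow> bool" where
  "iso_data g m1 m2 n \<longleftrightarrow> g \<in> {1,2,3,4,6} \<and> 0 < m1 \<and> m1 \<le> m2
     \<and> (odd g \<longrightarrow> m1 = m2) \<and> (m1 + m2) * g = 2 * n"

definition iso_delta :: "nat \<Rightarrow> nat \<Rightarrow> nat \<Rightarrow> real" where
  "iso_delta g m1 m2 = (if g \<ge> 2 then (real m2 - real m1) / (real m2 + real m1) else 0)"

definition weyl_chamber :: "nat \<Rightarrow> complex set" where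
  "weyl_chamber g = {x. x \<noteq> 0 \<and> 0 < Arg x \<and> Arg x < pi / real g}"

definition HS :: "nat \<Rightarrow> nat \<Rightarrow> real \<Rightarrow> complex \<Rightarrow> complex" where
  "HS g n \<delta> x = (let r = cmod x; \<theta> = Arg x in
     - complex_of_real (real n / r) * \<i> * cis \<theta>
       * complex_of_real (cot (real g * \<theta>) + \<delta> / sin (real g * \<theta>)))"

end

theory Submission
  imports Defs
begin

text \<open>Writing the position as \<open>y = e^{i\<theta>}\<close>,
the quantity \<open>u = Re (y^g) = cos g\<theta>\<close> has derivative \<open>Re (g y^{g-1} H^S(y))\<close>, and since
\<open>H^S(y) = -n i y (cot g\<theta> + \<delta> csc g\<theta>)\<close> this equals \<open>g n sin g\<theta> (cot g\<theta> + \<delta> csc g\<theta>) = g n (u + \<delta>)\<close>.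
Thus \<open>u + \<delta>\<close> solves the linear equation \<open>v' = g n v\<close> and is an exponential.\<close>

lemma has_vector_derivative_power:
  fixes y :: "real \<Rightarrow> 'a::real_normed_field"
  assumes "(y has_vector_derivative v) (at t within S)"
  shows "((\<lambda>t. y t ^ k) has_vector_derivative (of_nat k * v * y t ^ (k - 1))) (at t within S)"
proof -
  have "(y has_derivative (\<lambda>h. h *\<^sub>R v)) (at t within S)"
    using assms by (simp add: has_vector_derivative_def)
  from has_derivative_power[OF this, of k]
  show ?thesis unfolding has_vector_derivative_def
    by (rule has_derivative_eq_rhs) (auto simp: scaleR_conv_of_real fun_eq_iff)
qed

lemma linear_ODE_solution_explicit:
  fixes u :: "real \<Rightarrow> real"
  assumes "convex I" "t0 \<in> I" "t \<in> I"
    and deriv: "\<And>s. s \<in> I \<Longrightarrow> (u has_real_derivative c * (u s + d)) (at s within I)"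
  shows "u t + d = exp (c * (t - t0)) * (u t0 + d)"
proof -
  define h where "h s = exp (- c * s) * (u s + d)" for s
  have "\<exists>k. \<forall>s\<in>I. h s = k"
  proof (rule has_field_derivative_zero_constant[OF \<open>convex I\<close>])
    fix s assume "s \<in> I"
    have "(h has_real_derivative exp (- c * s) * (- c) * (u s + d) + exp (- c * s) * (c * (u s + d)))
        (at s within I)"
      unfolding h_def using deriv[OF \<open>s \<in> I\<close>]
      by (auto intro!: derivative_eq_intros)
    then show "(h has_real_derivative 0) (at s within I)"
      by (simp add: algebra_simps)
  qed
  then have "h t = h t0"
    using assms(2,3) by metis
  then have "u t + d = exp (c * t) * exp (- c * t0) * (u t0 + d)"
    by (simp add: h_def exp_minus field_simps)
  then show ?thesis
    by (simp add: right_diff_distrib exp_diff exp_minus field_simps)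
qed

lemma Arg_cis_eq:
  assumes "0 < a" "a \<le> pi"
  shows "Arg (cis a) = a"
  using assms by (intro cis_Arg_unique) auto

lemma HS_cis:
  assumes "0 < a" "a < pi / real g" "g > 0"
  shows "HS g n \<delta> (cis a) = - of_real (real n) * \<i> * cis a
           * of_real (cot (real g * a) + \<delta> / sin (real g * a))"
proof -
  have "pi / real g \<le> pi"
    using assms(3) by (simp add: divide_le_eq)
  then have "Arg (cis a) = a"
    using assms by (intro Arg_cis_eq) auto
  then show ?thesis
    unfolding HS_def Let_def by simp
qed

text \<open>\<open>sin g\<theta> > 0\<close> on the arc is what lets \<open>sin g\<theta> \<cdot> csc g\<theta>\<close> cancel (\<open>x / 0 = 0\<close> otherwise).
\<open>DeMoivre\<close> is qualified because HOL-Analysis shadows it by a version for complex angles.\<close>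
lemma Re_power_derivative_HS_cis:
  assumes "0 < a" "a < pi / real g" "g > 0"
  shows "Re (of_nat g * HS g n \<delta> (cis a) * cis a ^ (g - 1))
           = real g * real n * (Re (cis a ^ g) + \<delta>)"
proof -
  have "0 < real g * a" "real g * a < pi"
    using assms by (auto simp: field_simps)
  then have sin_pos: "sin (real g * a) > 0"
    by (rule sin_gt_zero)
  have "cis a * cis a ^ (g - 1) = cis a ^ g"
    using assms(3) by (simp add: power_eq_if)
  then have power_split: "cis a * cis a ^ (g - 1) = cis (real g * a)"
    by (simp only: Complex.DeMoivre)
  have "of_nat g * HS g n \<delta> (cis a) * cis a ^ (g - 1)
      = - of_real (real g * real n) * \<i> * (cis a * cis a ^ (g - 1))
          * of_real (cot (real g * a) + \<delta> / sin (real g * a))"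
    unfolding HS_cis[OF assms] by (simp add: algebra_simps)
  also have "Re \<dots> = real g * real n * sin (real g * a) * (cot (real g * a) + \<delta> / sin (real g * a))"
    unfolding power_split by (simp add: cis.ctr)
  also have "\<dots> = real g * real n * (cos (real g * a) + \<delta>)"
    using sin_pos by (simp add: cot_def field_simps)
  finally show ?thesis
    by (simp add: Complex.DeMoivre)
qed

lemma weyl_chamber_unit_Arg:
  assumes "x \<in> weyl_chamber g" "cmod x = 1"
  shows "x = cis (Arg x)" "0 < Arg x" "Arg x < pi / real g"
proof -
  have "x \<noteq> 0"
    using assms(1) by (simp add: weyl_chamber_def)
  then show "x = cis (Arg x)"
    using assms(2) by (simp add: cis_Arg sgn_div_norm)
  show "0 < Arg x" "Arg x < pi / real g"
    using assms(1) by (auto simp: weyl_chamber_def)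
qed

lemma Re_power_derivative_HS_chamber:
  assumes "x \<in> weyl_chamber g" "cmod x = 1" "g > 0"
  shows "Re (of_nat g * HS g n \<delta> x * x ^ (g - 1)) = real g * real n * (Re (x ^ g) + \<delta>)"
  using Re_power_derivative_HS_cis[OF weyl_chamber_unit_Arg(2,3)[OF assms(1,2)] assms(3)]
    weyl_chamber_unit_Arg(1)[OF assms(1,2)]
  by simp

theorem proposition4p3:
  fixes g m1 m2 n :: nat and I :: "real set" and y :: "real \<Rightarrow> complex"
    and \<theta> :: "real \<Rightarrow> real" and \<theta>0 :: real
  assumes data: "iso_data g m1 m2 n"
    and I: "is_interval I" "0 \<in> I"
    and flow: "\<forall>t\<in>I. (y has_vector_derivative HS g n (iso_delta g m1 m2) (y t)) (at t within I)"
    and polar: "\<forall>t\<in>I. y t = cis (\<theta> t) \<and> y t \<in> weyl_chamber g"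
    and init: "y 0 = cis \<theta>0" "0 < \<theta>0" "\<theta>0 < pi / real g"
  shows "\<forall>t\<in>I.
     cos (real g * \<theta> t) = exp (real g * real n * t) * (cos (real g * \<theta>0) + iso_delta g m1 m2)
                            - iso_delta g m1 m2"
proof
  fix t assume "t \<in> I"
  define \<delta> where "\<delta> = iso_delta g m1 m2"
  define u where "u s = Re (y s ^ g)" for s
  have "g > 0"
    using data by (auto simp: iso_data_def)
  have u_deriv: "(u has_real_derivative real g * real n * (u s + \<delta>)) (at s within I)"
    if "s \<in> I" for s
  proof -
    have "cmod (y s) = 1" "y s \<in> weyl_chamber g"
      using polar that by auto
    then have "Re (of_nat g * HS g n \<delta> (y s) * y s ^ (g - 1)) = real g * real n * (u s + \<delta>)"
      unfolding u_def by (intro Re_power_derivative_HS_chamber \<open>g > 0\<close>)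
    moreover have "(u has_real_derivative Re (of_nat g * HS g n \<delta> (y s) * y s ^ (g - 1)))
        (at s within I)"
      unfolding u_def \<delta>_def
      by (intro has_field_derivative_Re has_vector_derivative_power flow[rule_format, OF that])
    ultimately show ?thesis
      by simp
  qed
  have "u t + \<delta> = exp (real g * real n * t) * (u 0 + \<delta>)"
    using linear_ODE_solution_explicit[OF is_interval_convex[OF I(1)] I(2) \<open>t \<in> I\<close> u_deriv]
    by simp
  moreover have "u t = cos (real g * \<theta> t)"
    using polar \<open>t \<in> I\<close> by (simp add: u_def Complex.DeMoivre)
  moreover have "u 0 = cos (real g * \<theta>0)"
    by (simp add: u_def init(1) Complex.DeMoivre)
  ultimately show "cos (real g * \<theta> t) = exp (real g * real n * t) * (cos (real g * \<theta>0) + iso_delta g m1 m2)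
                            - iso_delta g m1 m2"
    by (simp add: \<delta>_def)
qed

end
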